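(* Let $\tilde N=2^{k\tilde m}$ with $1\le\tilde m<m$, and let $\varphi_{\tilde N,z}=\sum_{j=0}^{\tilde m-1}\psi_{j,z}$. Then there is a universal constant $C_F$ (independent of $k,n,\tilde m$) such that $$\mathbb E\max_{z\in V_{\tilde N}}(\varphi_{N,z}-\varphi_{\tilde N,z})\le\sqrt{8k}\,C_F.$$ Furthermore, for every $\delta>0$ and all $n$ sufficiently large (depending on $\delta$ and $k$), $$\mathbb P\Big(\max_{z\in V_{\tilde N}}(\varphi_{N,z}-\varphi_{\tilde N,z})>2\delta\log N\Big)\le 2\exp\Big(-\frac{\delta^2\log^22}{2k(m-\tilde m)}n^2\Big).$$
   Context: Let $k\ge1$ be an integer, $n\ge1$, $N=2^n$, $m=\lfloor n/k\rfloor$, and $V_M=\{0,1,\dots,M-1\}^2$; $\log$ is the natural logarithm. For $j\ge0$ let $\mathcal B_j$ be the set of boxes $x+\{0,\dots,2^j-1\}^2$ with $x\in\mathbb Z^2$, and $\mathcal B_j(z)$ those containing $z$. Let $\{b_{j,B}\}$ be independent centered Gaussians with $\mathrm{Var}(b_{j,B})=2^{-2j}$. Set $\psi_{j,z}=\sum_{B\in\mathcal B_{jk}(z)}\sqrt k\,b_{jk,B}$ and $\varphi_{N,z}=\sum_{j=0}^{m-1}\psi_{j,z}$. *)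

theory Defs
  imports "HOL-Probability.Probability"
begin

definition box :: "nat \<Rightarrow> int \<times> int \<Rightarrow> (int \<times> int) set" where
  "box j x = {fst x .. fst x + 2^j - 1} \<times> {snd x .. snd x + 2^j - 1}"

definition boxes_at :: "nat \<Rightarrow> int \<times> int \<Rightarrow> (int \<times> int) set" where
  "boxes_at j z = {x. z \<in> box j x}"

definition V :: "nat \<Rightarrow> (int \<times> int) set" where
  "V M = {0..<int M} \<times> {0..<int M}"

(* psi_{j,z} = sum_{B in B_{jk}(z)} sqrt k * b_{jk,B};  b (i, x) is b_{i,B} for B = box i x *)
definition psi :: "nat \<Rightarrow> (nat \<times> (int \<times> int) \<Rightarrow> 'a \<Rightarrow> real) \<Rightarrow> nat \<Rightarrow> int \<times> int \<Rightarrow> 'a \<Rightarrow> real" where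
  "psi k b j z \<omega> = (\<Sum>x\<in>boxes_at (j * k) z. sqrt (real k) * b (j * k, x) \<omega>)"

(* sum_{j=0}^{L-1} psi_{j,z}; phi_N uses L = m = n div k, phi_{N~} uses L = m~ *)
definition phi :: "nat \<Rightarrow> (nat \<times> (int \<times> int) \<Rightarrow> 'a \<Rightarrow> real) \<Rightarrow> nat \<Rightarrow> int \<times> int \<Rightarrow> 'a \<Rightarrow> real" where
  "phi k b L z \<omega> = (\<Sum>j<L. psi k b j z \<omega>)"

definition gaussian_family :: "'a measure \<Rightarrow> (nat \<times> (int \<times> int) \<Rightarrow> 'a \<Rightarrow> real) \<Rightarrow> bool" where
  "gaussian_family M b \<longleftrightarrow> prob_space M \<and>
     prob_space.indep_vars M (\<lambda>_. borel) b UNIV \<and>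
     (\<forall>j x. distributed M lborel (b (j, x)) (normal_density 0 ((1/2) ^ j)))"

definition maxdiff :: "nat \<Rightarrow> (nat \<times> (int \<times> int) \<Rightarrow> 'a \<Rightarrow> real) \<Rightarrow> nat \<Rightarrow> nat \<Rightarrow> 'a \<Rightarrow> real" where
  "maxdiff k b n mt \<omega> =
     Max ((\<lambda>z. phi k b (n div k) z \<omega> - phi k b mt z \<omega>) ` V (2 ^ (k * mt)))"

end

theory Submission
  imports Defs
begin

text \<open>On \<open>V\<^sub>N\<^sub>'\<close> (with \<open>N' = 2\<^sup>k\<^sup>m\<^sup>t\<close>) the difference \<open>\<phi>\<^sub>N - \<phi>\<^sub>N\<^sub>'\<close> is a finite linear combination of the
  independent Gaussians \<open>b\<close>, hence sub-Gaussian with variance at most \<open>k (m - mt)\<close>; the difference of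
  its values at two points at distance \<open>D\<close> only involves the boxes containing exactly one of them and
  has variance \<open>O (k D 2\<^sup>-\<^sup>k\<^sup>m\<^sup>t)\<close>. The expectation bound is a chaining argument along the dyadic
  approximations of the points of \<open>V\<^sub>N\<^sub>'\<close>: at level \<open>l\<close> there are at most \<open>4\<^sup>2\<^sup>l\<^sup>+\<^sup>1\<close> increments, each of
  variance at most \<open>16 k 2\<^sup>-\<^sup>l\<close>, so their maximum has expectation \<open>O (\<surd>k (l + 1) (3/4)\<^sup>l)\<close>, which is
  summable in \<open>l\<close>. The tail bound is a union bound over the \<open>4\<^sup>k\<^sup>m\<^sup>t \<le> 4\<^sup>n\<close> points; when the variance
  \<open>k (m - mt)\<close> is large compared to \<open>\<delta>\<^sup>2 n\<close> one splits off the value at the origin and applies the union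
  bound to the increments from the origin instead, whose variance is only \<open>16 k\<close>.\<close>

section \<open>Sub-Gaussian random variables\<close>

definition subgaussian :: "'a measure \<Rightarrow> ('a \<Rightarrow> real) \<Rightarrow> real \<Rightarrow> bool" where
  "subgaussian M X v \<longleftrightarrow> X \<in> borel_measurable M \<and>
     (\<forall>t. integrable M (\<lambda>\<omega>. exp (t * X \<omega>)) \<and> (\<integral>\<omega>. exp (t * X \<omega>) \<partial>M) \<le> exp (t\<^sup>2 * v / 2))"

lemma subgaussian_mono:
  assumes "subgaussian M X v" "v \<le> w"
  shows "subgaussian M X w"
proof -
  have "exp (t\<^sup>2 * v / 2) \<le> exp (t\<^sup>2 * w / 2)" for t :: real
    using assms(2) by (simp add: mult_left_mono)
  then show ?thesis
    using assms(1) unfolding subgaussian_def by (meson order_trans)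
qed

lemma subgaussian_integrable:
  assumes "subgaussian M X v"
  shows "integrable M X"
proof (rule Bochner_Integration.integrable_bound)
  show "integrable M (\<lambda>\<omega>. exp (1 * X \<omega>) + exp ((-1) * X \<omega>))"
    using assms unfolding subgaussian_def by (intro Bochner_Integration.integrable_add) blast+
  show "X \<in> borel_measurable M" using assms unfolding subgaussian_def by blast
  have "\<bar>x\<bar> \<le> exp x + exp (- x)" for x :: real
    using exp_ge_add_one_self[of x] exp_ge_add_one_self[of "-x"] exp_gt_zero[of x] exp_gt_zero[of "-x"]
    by linarith
  then show "AE \<omega> in M. norm (X \<omega>) \<le> norm (exp (1 * X \<omega>) + exp ((-1) * X \<omega>))"
    by (simp add: add_pos_pos)
qed

lemma (in prob_space) subgaussian_tail:
  assumes X: "subgaussian M X v" and v: "0 < v" and a: "0 \<le> a"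
  shows "prob {\<omega> \<in> space M. a < X \<omega>} \<le> exp (- a\<^sup>2 / (2 * v))"
proof -
  define t where "t = a / v"
  have t: "0 \<le> t" unfolding t_def using a v by simp
  have meas: "X \<in> borel_measurable M" and int: "integrable M (\<lambda>\<omega>. exp (t * X \<omega>))"
    and mgf: "(\<integral>\<omega>. exp (t * X \<omega>) \<partial>M) \<le> exp (t\<^sup>2 * v / 2)"
    using X unfolding subgaussian_def by auto
  have "prob {\<omega> \<in> space M. a < X \<omega>} \<le> prob {\<omega> \<in> space M. exp (t * a) \<le> exp (t * X \<omega>)}"
    using t meas by (intro finite_measure_mono) (auto intro: mult_left_mono)
  also have "\<dots> \<le> (\<integral>\<omega>. exp (t * X \<omega>) \<partial>M) / exp (t * a)"
    using int by (intro integral_Markov_inequality_measure[where A = "space M"]) auto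
  also have "\<dots> \<le> exp (t\<^sup>2 * v / 2) / exp (t * a)"
    using mgf by (simp add: divide_right_mono)
  also have "\<dots> = exp (- a\<^sup>2 / (2 * v))"
    unfolding t_def using v by (simp add: exp_diff[symmetric] field_simps power2_eq_square)
  finally show ?thesis .
qed

lemma (in prob_space) subgaussian_Max_tail:
  assumes A: "finite A" "A \<noteq> {}" and X: "\<And>i. i \<in> A \<Longrightarrow> subgaussian M (X i) v"
    and v: "0 < v" and a: "0 \<le> a"
  shows "prob {\<omega> \<in> space M. a < Max ((\<lambda>i. X i \<omega>) ` A)} \<le> card A * exp (- a\<^sup>2 / (2 * v))"
proof -
  have meas: "\<And>i. i \<in> A \<Longrightarrow> X i \<in> borel_measurable M"
    using X unfolding subgaussian_def by blast
  have "prob {\<omega> \<in> space M. a < Max ((\<lambda>i. X i \<omega>) ` A)} \<le> prob (\<Union>i\<in>A. {\<omega> \<in> space M. a < X i \<omega>})"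
    using A meas by (intro finite_measure_mono) (auto simp: Max_gr_iff)
  also have "\<dots> \<le> (\<Sum>i\<in>A. prob {\<omega> \<in> space M. a < X i \<omega>})"
    using meas by (intro measure_UNION_le A) auto
  also have "\<dots> \<le> (\<Sum>i\<in>A. exp (- a\<^sup>2 / (2 * v)))"
    using X v a by (intro sum_mono subgaussian_tail)
  finally show ?thesis by simp
qed

lemma integrable_Max:
  fixes X :: "'i \<Rightarrow> 'a \<Rightarrow> real"
  assumes "finite A" "A \<noteq> {}" "\<And>i. i \<in> A \<Longrightarrow> integrable M (X i)"
  shows "integrable M (\<lambda>\<omega>. Max ((\<lambda>i. X i \<omega>) ` A))"
  using assms
proof (induction A rule: finite_ne_induct)
  case (insert i A)
  then show ?case by (simp add: integrable_max)
qed simp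

text \<open>For \<open>t > 0\<close>, \<open>t max\<^sub>i X\<^sub>i \<le> ln (\<Sum>\<^sub>i exp (t X\<^sub>i))\<close>, and \<open>ln y \<le> y/c + ln c - 1\<close> linearises the
  logarithm at \<open>c = |A| exp (t\<^sup>2 v / 2)\<close>, an upper bound for the expectation of the sum.\<close>

lemma (in prob_space) subgaussian_Max_expectation:
  assumes A: "finite A" "A \<noteq> {}" and X: "\<And>i. i \<in> A \<Longrightarrow> subgaussian M (X i) v"
    and t: "0 < t"
  shows "integrable M (\<lambda>\<omega>. Max ((\<lambda>i. X i \<omega>) ` A))"
    "(\<integral>\<omega>. Max ((\<lambda>i. X i \<omega>) ` A) \<partial>M) \<le> ln (card A) / t + t * v / 2"
proof -
  show int: "integrable M (\<lambda>\<omega>. Max ((\<lambda>i. X i \<omega>) ` A))"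
    using A X by (intro integrable_Max subgaussian_integrable)
  define c where "c = card A * exp (t\<^sup>2 * v / 2)"
  have cA: "0 < real (card A)" using A by (simp add: card_gt_0_iff)
  have c: "0 < c" unfolding c_def using cA by simp
  define Y where "Y \<omega> = (\<Sum>i\<in>A. exp (t * X i \<omega>))" for \<omega>
  have Yint: "integrable M Y"
    unfolding Y_def using X unfolding subgaussian_def by auto
  have EY: "(\<integral>\<omega>. Y \<omega> \<partial>M) \<le> c"
  proof -
    have "(\<integral>\<omega>. Y \<omega> \<partial>M) = (\<Sum>i\<in>A. \<integral>\<omega>. exp (t * X i \<omega>) \<partial>M)"
      unfolding Y_def using X unfolding subgaussian_def by (simp add: Bochner_Integration.integral_sum)
    also have "\<dots> \<le> (\<Sum>i\<in>A. exp (t\<^sup>2 * v / 2))"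
      using X unfolding subgaussian_def by (intro sum_mono) blast
    finally show ?thesis unfolding c_def by simp
  qed
  have pointwise: "Max ((\<lambda>i. X i \<omega>) ` A) \<le> (Y \<omega> / c + ln c - 1) / t" for \<omega>
  proof -
    have "Max ((\<lambda>i. X i \<omega>) ` A) \<in> (\<lambda>i. X i \<omega>) ` A"
      using A by (intro Max_in) auto
    then obtain i where i: "i \<in> A" "Max ((\<lambda>i. X i \<omega>) ` A) = X i \<omega>" by auto
    have le: "exp (t * X i \<omega>) \<le> Y \<omega>"
      unfolding Y_def using i A by (intro member_le_sum) auto
    then have Y: "0 < Y \<omega>" by (rule less_le_trans[OF exp_gt_zero])
    have "t * X i \<omega> \<le> ln (Y \<omega>)"
      using le Y by (simp add: ln_ge_iff)
    also have "\<dots> = ln (Y \<omega> / c) + ln c" using Y c by (simp add: ln_div)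
    also have "\<dots> \<le> Y \<omega> / c - 1 + ln c" using ln_le_minus_one[of "Y \<omega> / c"] Y c by simp
    finally show ?thesis using i t by (simp add: field_simps)
  qed
  have "(\<integral>\<omega>. Max ((\<lambda>i. X i \<omega>) ` A) \<partial>M) \<le> (\<integral>\<omega>. (Y \<omega> / c + ln c - 1) / t \<partial>M)"
    using int Yint pointwise by (intro integral_mono) auto
  also have "\<dots> = ((\<integral>\<omega>. Y \<omega> \<partial>M) / c + ln c - 1) / t"
    using Yint by (simp add: prob_space)
  also have "\<dots> \<le> (c / c + ln c - 1) / t"
    using EY c t by (intro divide_right_mono) (auto simp: divide_right_mono)
  also have "\<dots> = ln (card A) / t + t * v / 2"
    using cA t unfolding c_def by (simp add: ln_mult field_simps power2_eq_square)
  finally show "(\<integral>\<omega>. Max ((\<lambda>i. X i \<omega>) ` A) \<partial>M) \<le> ln (card A) / t + t * v / 2" .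
qed

section \<open>Linear combinations of the Gaussian family\<close>

lemma normal_density_mgf:
  assumes "0 < \<sigma>"
  shows "integrable lborel (\<lambda>x. normal_density 0 \<sigma> x * exp (t * x))"
    and "(\<integral>x. normal_density 0 \<sigma> x * exp (t * x) \<partial>lborel) = exp (t\<^sup>2 * \<sigma>\<^sup>2 / 2)"
proof -
  have shift: "normal_density 0 \<sigma> x * exp (t * x) = exp (t\<^sup>2 * \<sigma>\<^sup>2 / 2) * normal_density (t * \<sigma>\<^sup>2) \<sigma> x"
    for x
  proof -
    have "- (x - 0)\<^sup>2 / (2 * \<sigma>\<^sup>2) + t * x = t\<^sup>2 * \<sigma>\<^sup>2 / 2 + - (x - t * \<sigma>\<^sup>2)\<^sup>2 / (2 * \<sigma>\<^sup>2)"
      using assms by (simp add: field_simps power2_eq_square)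
    then show ?thesis
      unfolding normal_density_def by (simp add: exp_add[symmetric] mult_ac)
  qed
  show "integrable lborel (\<lambda>x. normal_density 0 \<sigma> x * exp (t * x))"
    unfolding shift using integrable_normal_density[OF assms] by simp
  show "(\<integral>x. normal_density 0 \<sigma> x * exp (t * x) \<partial>lborel) = exp (t\<^sup>2 * \<sigma>\<^sup>2 / 2)"
    unfolding shift using integral_normal_density[OF assms] by simp
qed

lemma gaussian_family_prob_space: "gaussian_family M b \<Longrightarrow> prob_space M"
  by (simp add: gaussian_family_def)

lemma gaussian_family_distributed:
  "gaussian_family M b \<Longrightarrow> distributed M lborel (b p) (normal_density 0 ((1/2) ^ fst p))"
  unfolding gaussian_family_def by (cases p) auto

lemma gaussian_family_measurable [measurable]: "gaussian_family M b \<Longrightarrow> b p \<in> borel_measurable M"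
  using distributed_measurable[OF gaussian_family_distributed] by simp

lemma gaussian_family_exp:
  assumes "gaussian_family M b"
  shows "integrable M (\<lambda>\<omega>. exp (t * b p \<omega>))"
    and "(\<integral>\<omega>. exp (t * b p \<omega>) \<partial>M) = exp (t\<^sup>2 * (1/4) ^ fst p / 2)"
proof -
  note d = gaussian_family_distributed[OF assms, of p]
  have sq: "((1/2::real) ^ fst p)\<^sup>2 = (1/4) ^ fst p"
    by (simp add: power2_eq_square power_mult_distrib[symmetric])
  show "integrable M (\<lambda>\<omega>. exp (t * b p \<omega>))"
    using distributed_integrable[OF d, of "\<lambda>x. exp (t * x)"] normal_density_mgf(1) by simp
  show "(\<integral>\<omega>. exp (t * b p \<omega>) \<partial>M) = exp (t\<^sup>2 * (1/4) ^ fst p / 2)"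
    using distributed_integral[OF d, of "\<lambda>x. exp (t * x)"] normal_density_mgf(2) sq by simp
qed

lemma gaussian_family_integrable:
  assumes "gaussian_family M b"
  shows "integrable M (b p)" and "(\<integral>\<omega>. b p \<omega> \<partial>M) = 0"
proof -
  interpret prob_space M using assms by (rule gaussian_family_prob_space)
  note d = gaussian_family_distributed[OF assms, of p]
  show "integrable M (b p)"
    using distributed_integrable[OF d, of "\<lambda>x. x"] integrable_normal_moment_nz_1 by simp
  show "(\<integral>\<omega>. b p \<omega> \<partial>M) = 0"
    using normal_distributed_expectation[OF _ d] by simp
qed

text \<open>Since \<open>Var b\<^bsub>j,B\<^esub> = 4\<^sup>-\<^sup>j\<close>, \<open>lincomb_var S c\<close> is the variance of \<open>lincomb b S c\<close>.\<close>

definition lincomb ::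
    "(nat \<times> (int \<times> int) \<Rightarrow> 'a \<Rightarrow> real) \<Rightarrow> (nat \<times> (int \<times> int)) set \<Rightarrow> (nat \<times> (int \<times> int) \<Rightarrow> real) \<Rightarrow> 'a \<Rightarrow> real"
  where "lincomb b S c \<omega> = (\<Sum>p\<in>S. c p * b p \<omega>)"

definition lincomb_var :: "(nat \<times> (int \<times> int)) set \<Rightarrow> (nat \<times> (int \<times> int) \<Rightarrow> real) \<Rightarrow> real" where
  "lincomb_var S c = (\<Sum>p\<in>S. (c p)\<^sup>2 * (1/4) ^ fst p)"

lemma lincomb_diff: "lincomb b S (\<lambda>p. c p - d p) \<omega> = lincomb b S c \<omega> - lincomb b S d \<omega>"
  unfolding lincomb_def by (simp add: sum_subtractf left_diff_distrib)

lemma subgaussian_lincomb: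
  assumes b: "gaussian_family M b" and S: "finite S"
  shows "subgaussian M (lincomb b S c) (lincomb_var S c)"
  unfolding subgaussian_def
proof (intro conjI allI)
  interpret prob_space M using b by (rule gaussian_family_prob_space)
  show "lincomb b S c \<in> borel_measurable M"
    unfolding lincomb_def[abs_def] using b by measurable
  fix t :: real
  have "indep_vars (\<lambda>_. borel) (\<lambda>p. (\<lambda>x. exp (t * c p * x)) \<circ> b p) UNIV"
    using b unfolding gaussian_family_def by (intro indep_vars_compose) auto
  from indep_vars_subset[OF this, of S]
  have indep: "indep_vars (\<lambda>_. borel) (\<lambda>p \<omega>. exp (t * c p * b p \<omega>)) S"
    by (simp add: comp_def)
  have prod: "exp (t * lincomb b S c \<omega>) = (\<Prod>p\<in>S. exp (t * c p * b p \<omega>))" for \<omega>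
    unfolding lincomb_def using S by (simp add: exp_sum sum_distrib_left mult.assoc)
  have int: "\<And>p. p \<in> S \<Longrightarrow> integrable M (\<lambda>\<omega>. exp (t * c p * b p \<omega>))"
    by (rule gaussian_family_exp(1)[OF b])
  show "integrable M (\<lambda>\<omega>. exp (t * lincomb b S c \<omega>))"
    unfolding prod by (rule indep_vars_integrable[OF S indep int])
  have "(\<integral>\<omega>. exp (t * lincomb b S c \<omega>) \<partial>M) = (\<Prod>p\<in>S. \<integral>\<omega>. exp (t * c p * b p \<omega>) \<partial>M)"
    unfolding prod by (rule indep_vars_lebesgue_integral[OF S indep int])
  also have "\<dots> = (\<Prod>p\<in>S. exp ((t * c p)\<^sup>2 * (1/4) ^ fst p / 2))"
    using gaussian_family_exp(2)[OF b] by simp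
  also have "\<dots> = exp (t\<^sup>2 * lincomb_var S c / 2)"
    unfolding lincomb_var_def using S
    by (simp add: exp_sum sum_divide_distrib sum_distrib_left power_mult_distrib mult_ac)
  finally show "(\<integral>\<omega>. exp (t * lincomb b S c \<omega>) \<partial>M) \<le> exp (t\<^sup>2 * lincomb_var S c / 2)"
    by simp
qed

lemma integral_lincomb:
  assumes "gaussian_family M b"
  shows "(\<integral>\<omega>. lincomb b S c \<omega> \<partial>M) = 0"
  unfolding lincomb_def using gaussian_family_integrable[OF assms]
  by (simp add: Bochner_Integration.integral_sum)

section \<open>Counting boxes\<close>

definition corner_range :: "nat \<Rightarrow> int \<Rightarrow> int set" where
  "corner_range i a = {a - 2 ^ i + 1 .. a}"

lemma mem_box_iff: "z \<in> box i x \<longleftrightarrow> fst x \<in> corner_range i (fst z) \<and> snd x \<in> corner_range i (snd z)"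
  unfolding box_def corner_range_def by (cases z; cases x) auto

lemma boxes_at_eq: "boxes_at i z = corner_range i (fst z) \<times> corner_range i (snd z)"
  unfolding boxes_at_def using mem_box_iff by auto

lemma finite_corner_range [simp]: "finite (corner_range i a)"
  unfolding corner_range_def by simp

lemma finite_boxes_at [simp]: "finite (boxes_at i z)"
  unfolding boxes_at_eq by simp

lemma card_corner_range: "card (corner_range i a) = 2 ^ i"
  unfolding corner_range_def by (simp add: nat_power_eq)

lemma card_boxes_at: "card (boxes_at i z) = 4 ^ i"
  by (simp add: boxes_at_eq card_cartesian_product card_corner_range power_mult_distrib[symmetric])

lemma card_corner_range_diff: "card (corner_range i a - corner_range i c) \<le> nat \<bar>a - c\<bar>"
proof (cases "c \<le> a")
  case True
  then have "corner_range i a - corner_range i c \<subseteq> {c + 1 .. a}"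
    unfolding corner_range_def by auto
  then show ?thesis
    using True card_mono[of "{c + 1 .. a}"] by fastforce
next
  case False
  then have "corner_range i a - corner_range i c \<subseteq> {a - 2 ^ i + 1 .. c - 2 ^ i}"
    unfolding corner_range_def by auto
  then show ?thesis
    using False card_mono[of "{a - 2 ^ i + 1 .. c - 2 ^ i}"] by fastforce
qed

lemma card_product_symdiff_le:
  assumes "finite A1" "finite A2" "finite B1" "finite B2"
  shows "card (sym_diff (A1 \<times> A2) (B1 \<times> B2))
    \<le> card (sym_diff A1 B1) * card (A2 \<union> B2) + card (A1 \<union> B1) * card (sym_diff A2 B2)"
proof -
  have "sym_diff (A1 \<times> A2) (B1 \<times> B2) \<subseteq> sym_diff A1 B1 \<times> (A2 \<union> B2) \<union> (A1 \<union> B1) \<times> sym_diff A2 B2"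
    by auto
  then have "card (sym_diff (A1 \<times> A2) (B1 \<times> B2))
      \<le> card (sym_diff A1 B1 \<times> (A2 \<union> B2) \<union> (A1 \<union> B1) \<times> sym_diff A2 B2)"
    using assms by (intro card_mono) auto
  also have "\<dots> \<le> card (sym_diff A1 B1 \<times> (A2 \<union> B2)) + card ((A1 \<union> B1) \<times> sym_diff A2 B2)"
    by (rule card_Un_le)
  finally show ?thesis by (simp add: card_cartesian_product)
qed

lemma card_boxes_at_symdiff:
  "card (sym_diff (boxes_at i z) (boxes_at i w))
     \<le> 4 * 2 ^ i * (nat \<bar>fst z - fst w\<bar> + nat \<bar>snd z - snd w\<bar>)"
proof -
  have symdiff: "card (sym_diff (corner_range i a) (corner_range i c)) \<le> 2 * nat \<bar>a - c\<bar>" for a c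
    using card_Un_le[of "corner_range i a - corner_range i c" "corner_range i c - corner_range i a"]
      card_corner_range_diff[of i a c] card_corner_range_diff[of i c a] by (simp add: abs_minus_commute)
  have union: "card (corner_range i a \<union> corner_range i c) \<le> 2 * 2 ^ i" for a c
    using card_Un_le[of "corner_range i a" "corner_range i c"] by (simp add: card_corner_range)
  have "card (sym_diff (boxes_at i z) (boxes_at i w))
      \<le> card (sym_diff (corner_range i (fst z)) (corner_range i (fst w)))
          * card (corner_range i (snd z) \<union> corner_range i (snd w))
        + card (corner_range i (fst z) \<union> corner_range i (fst w))
          * card (sym_diff (corner_range i (snd z)) (corner_range i (snd w)))"
    unfolding boxes_at_eq by (rule card_product_symdiff_le) simp_all
  also have "\<dots> \<le> 2 * nat \<bar>fst z - fst w\<bar> * (2 * 2 ^ i) + 2 * 2 ^ i * (2 * nat \<bar>snd z - snd w\<bar>)"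
    by (intro add_mono mult_mono symdiff union) simp_all
  finally show ?thesis by (simp add: algebra_simps)
qed

definition square :: "int \<Rightarrow> (int \<times> int) set" where
  "square R = {-R..R} \<times> {-R..R}"

text \<open>\<open>psi_sum k b mt m z\<close> is \<open>\<Sum>\<^bsub>mt \<le> j < m\<^esub> \<psi>\<^bsub>j,z\<^esub>\<close> for \<open>z \<in> V (2\<^sup>k\<^sup>*\<^sup>m\<^sup>t)\<close> (lemma \<open>phi_diff_eq_psi_sum\<close>),
  written as a linear combination over a set of boxes that does not depend on \<open>z\<close>: the boxes of side
  \<open>2\<^sup>j\<^sup>k\<close> with a corner in a square containing all boxes that meet \<open>V (2\<^sup>k\<^sup>*\<^sup>m\<^sup>t)\<close>, where
  \<open>box_coeff k z\<close> is the coefficient of \<open>b\<^bsub>jk,B\<^esub>\<close> in \<open>\<psi>\<^bsub>j,z\<^esub>\<close>.\<close>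

definition field_boxes :: "nat \<Rightarrow> nat \<Rightarrow> nat \<Rightarrow> (nat \<times> (int \<times> int)) set" where
  "field_boxes k mt m = (\<lambda>(j, x). (j * k, x)) ` ({mt..<m} \<times> square (2 ^ (m * k) + 2 ^ (k * mt)))"

definition box_coeff :: "nat \<Rightarrow> int \<times> int \<Rightarrow> nat \<times> (int \<times> int) \<Rightarrow> real" where
  "box_coeff k z p = (if z \<in> box (fst p) (snd p) then sqrt (real k) else 0)"

definition psi_sum ::
    "nat \<Rightarrow> (nat \<times> (int \<times> int) \<Rightarrow> 'a \<Rightarrow> real) \<Rightarrow> nat \<Rightarrow> nat \<Rightarrow> int \<times> int \<Rightarrow> 'a \<Rightarrow> real"
  where "psi_sum k b mt m z = lincomb b (field_boxes k mt m) (box_coeff k z)"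

lemma finite_square [simp]: "finite (square R)"
  unfolding square_def by simp

lemma finite_field_boxes [simp]: "finite (field_boxes k mt m)"
  unfolding field_boxes_def by simp

lemma sum_field_boxes:
  assumes "0 < k"
  shows "(\<Sum>p\<in>field_boxes k mt m. f p)
    = (\<Sum>j\<in>{mt..<m}. \<Sum>x\<in>square (2 ^ (m * k) + 2 ^ (k * mt)). f (j * k, x))"
proof -
  have "inj_on (\<lambda>(j, x). (j * k, x)) A" for A :: "(nat \<times> (int \<times> int)) set"
    using assms by (auto simp: inj_on_def)
  then show ?thesis
    unfolding field_boxes_def by (simp add: sum.reindex sum.cartesian_product case_prod_unfold)
qed

lemma psi_eq_sum_box_coeff:
  assumes "boxes_at (j * k) z \<subseteq> X" "finite X"
  shows "psi k b j z \<omega> = (\<Sum>x\<in>X. box_coeff k z (j * k, x) * b (j * k, x) \<omega>)"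
proof -
  have "(\<Sum>x\<in>X. box_coeff k z (j * k, x) * b (j * k, x) \<omega>)
      = (\<Sum>x\<in>X. if x \<in> boxes_at (j * k) z then sqrt (real k) * b (j * k, x) \<omega> else 0)"
    unfolding box_coeff_def boxes_at_def by (intro sum.cong) auto
  also have "\<dots> = (\<Sum>x\<in>X \<inter> boxes_at (j * k) z. sqrt (real k) * b (j * k, x) \<omega>)"
    using assms(2) by (simp add: sum.inter_restrict)
  also have "X \<inter> boxes_at (j * k) z = boxes_at (j * k) z" using assms(1) by blast
  finally show ?thesis unfolding psi_def by simp
qed

lemma phi_diff_eq_psi_sum:
  assumes k: "0 < k" and mt: "mt \<le> m" and z: "z \<in> V (2 ^ (k * mt))"
  shows "phi k b m z \<omega> - phi k b mt z \<omega> = psi_sum k b mt m z \<omega>"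
proof -
  define R :: int where "R = 2 ^ (m * k) + 2 ^ (k * mt)"
  have "boxes_at (j * k) z \<subseteq> square R" if "j < m" for j
  proof -
    have "(2::int) ^ (j * k) \<le> 2 ^ (m * k)" using that by (intro power_increasing) auto
    moreover have "(0::int) \<le> 2 ^ (k * mt)" "(0::int) \<le> 2 ^ (m * k)" by simp_all
    moreover have "0 \<le> fst z" "fst z < 2 ^ (k * mt)" "0 \<le> snd z" "snd z < 2 ^ (k * mt)"
      using z unfolding V_def by auto
    ultimately have "- R \<le> fst z - 2 ^ (j * k) + 1 \<and> fst z \<le> R \<and> - R \<le> snd z - 2 ^ (j * k) + 1 \<and> snd z \<le> R"
      unfolding R_def by linarith
    then show ?thesis
      unfolding boxes_at_eq square_def corner_range_def by auto
  qed
  then have psi: "psi k b j z \<omega> = (\<Sum>x\<in>square R. box_coeff k z (j * k, x) * b (j * k, x) \<omega>)"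
    if "j \<in> {mt..<m}" for j
    using that by (intro psi_eq_sum_box_coeff) auto
  have "phi k b m z \<omega> = phi k b mt z \<omega> + (\<Sum>j\<in>{mt..<m}. psi k b j z \<omega>)"
    unfolding phi_def lessThan_atLeast0 using sum.atLeastLessThan_concat[of 0 mt m, symmetric] mt by simp
  then show ?thesis
    unfolding psi_sum_def lincomb_def sum_field_boxes[OF k] R_def[symmetric] using psi by simp
qed

lemma sum_if_mem_le_card:
  fixes c :: real
  assumes "finite A" "finite B" "0 \<le> c"
  shows "(\<Sum>x\<in>A. if x \<in> B then c else 0) \<le> card B * c"
proof -
  have "(\<Sum>x\<in>A. if x \<in> B then c else 0) = card (A \<inter> B) * c"
    using assms(1) by (simp add: sum.inter_restrict[symmetric])
  also have "\<dots> \<le> card B * c"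
    using assms by (intro mult_right_mono) (auto intro: card_mono)
  finally show ?thesis .
qed

lemma level_sum_box_coeff:
  assumes "finite X"
  shows "(\<Sum>x\<in>X. (box_coeff k z (i, x))\<^sup>2 * (1/4) ^ i) \<le> k"
proof -
  have "(\<Sum>x\<in>X. (box_coeff k z (i, x))\<^sup>2 * (1/4) ^ i) = (\<Sum>x\<in>X. if x \<in> boxes_at i z then k * (1/4) ^ i else 0)"
    unfolding box_coeff_def boxes_at_def by (intro sum.cong) auto
  also have "\<dots> \<le> card (boxes_at i z) * (k * (1/4) ^ i)"
    using assms by (intro sum_if_mem_le_card) auto
  also have "\<dots> = k"
    by (simp add: card_boxes_at power_mult_distrib[symmetric])
  finally show ?thesis .
qed

lemma level_sum_box_coeff_diff:
  assumes "finite X" and D: "\<bar>fst z - fst w\<bar> \<le> int D" "\<bar>snd z - snd w\<bar> \<le> int D"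
  shows "(\<Sum>x\<in>X. (box_coeff k z (i, x) - box_coeff k w (i, x))\<^sup>2 * (1/4) ^ i) \<le> 8 * real k * real D * (1/2) ^ i"
proof -
  have "(\<Sum>x\<in>X. (box_coeff k z (i, x) - box_coeff k w (i, x))\<^sup>2 * (1/4) ^ i)
      = (\<Sum>x\<in>X. if x \<in> sym_diff (boxes_at i z) (boxes_at i w) then k * (1/4) ^ i else 0)"
    unfolding box_coeff_def boxes_at_def by (intro sum.cong) auto
  also have "\<dots> \<le> card (sym_diff (boxes_at i z) (boxes_at i w)) * (k * (1/4) ^ i)"
    using assms by (intro sum_if_mem_le_card) auto
  also have "\<dots> \<le> (4 * 2 ^ i * (real D + real D)) * (k * (1/4) ^ i)"
  proof -
    have "nat \<bar>fst z - fst w\<bar> \<le> D" "nat \<bar>snd z - snd w\<bar> \<le> D"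
      using D by (simp_all add: nat_le_iff)
    then have "card (sym_diff (boxes_at i z) (boxes_at i w)) \<le> 4 * 2 ^ i * (D + D)"
      using card_boxes_at_symdiff[of i z w] by (meson add_mono mult_le_mono2 order_trans)
    then have "real (card (sym_diff (boxes_at i z) (boxes_at i w))) \<le> real (4 * 2 ^ i * (D + D))"
      by (rule of_nat_mono)
    then have "real (card (sym_diff (boxes_at i z) (boxes_at i w))) \<le> 4 * 2 ^ i * (real D + real D)"
      by simp
    then show ?thesis by (rule mult_right_mono) simp
  qed
  also have "\<dots> = 8 * real k * real D * (2 ^ i * (1/4) ^ i)" by simp
  also have "(2::real) ^ i * (1/4) ^ i = (1/2) ^ i" by (simp add: power_mult_distrib[symmetric])
  finally show ?thesis .
qed

lemma sum_half_powers_mult_le: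
  assumes "0 < k"
  shows "(\<Sum>j\<in>{mt..<m}. (1/2::real) ^ (j * k)) \<le> 2 * (1/2) ^ (k * mt)"
proof -
  have "(\<Sum>j\<in>{mt..<m}. (1/2::real) ^ (j * k)) \<le> (\<Sum>j\<in>{mt..<m}. (1/2) ^ (k * mt) * (1/2) ^ (j - mt))"
  proof (intro sum_mono)
    fix j assume "j \<in> {mt..<m}"
    then obtain d where j: "j = mt + d" using le_Suc_ex by auto
    have "d \<le> k * d" using assms by simp
    then have "k * mt + (j - mt) \<le> k * mt + k * d" unfolding j by simp
    also have "\<dots> = j * k" unfolding j by (simp add: algebra_simps)
    finally have "k * mt + (j - mt) \<le> j * k" .
    then show "(1/2::real) ^ (j * k) \<le> (1/2) ^ (k * mt) * (1/2) ^ (j - mt)"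
      by (simp add: power_add[symmetric] power_decreasing)
  qed
  also have "\<dots> = (1/2) ^ (k * mt) * (\<Sum>i\<in>(\<lambda>j. j - mt) ` {mt..<m}. (1/2) ^ i)"
  proof -
    have "inj_on (\<lambda>j. j - mt) {mt..<m}" by (auto simp: inj_on_def)
    then show ?thesis by (simp add: sum_distrib_left sum.reindex)
  qed
  also have "\<dots> \<le> (1/2) ^ (k * mt) * 2"
    using geometric_sum_less[of "1/2::real" "(\<lambda>j. j - mt) ` {mt..<m}"] by simp
  finally show ?thesis by simp
qed

lemma lincomb_var_field_boxes:
  "0 < k \<Longrightarrow> lincomb_var (field_boxes k mt m) c
    = (\<Sum>j\<in>{mt..<m}. \<Sum>x\<in>square (2 ^ (m * k) + 2 ^ (k * mt)). (c (j * k, x))\<^sup>2 * (1/4) ^ (j * k))"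
  unfolding lincomb_var_def by (simp add: sum_field_boxes)

lemma lincomb_var_box_coeff:
  assumes "0 < k" "mt \<le> m"
  shows "lincomb_var (field_boxes k mt m) (box_coeff k z) \<le> real k * (real m - real mt)"
proof -
  have "lincomb_var (field_boxes k mt m) (box_coeff k z) \<le> (\<Sum>j\<in>{mt..<m}. real k)"
    unfolding lincomb_var_field_boxes[OF assms(1)] by (intro sum_mono level_sum_box_coeff) simp
  then show ?thesis using assms(2) by (simp add: of_nat_diff mult.commute)
qed

lemma lincomb_var_box_coeff_diff:
  assumes "0 < k" "\<bar>fst z - fst w\<bar> \<le> int D" "\<bar>snd z - snd w\<bar> \<le> int D"
  shows "lincomb_var (field_boxes k mt m) (\<lambda>p. box_coeff k z p - box_coeff k w p)
    \<le> 16 * real k * real D * (1/2) ^ (k * mt)"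
proof -
  have "lincomb_var (field_boxes k mt m) (\<lambda>p. box_coeff k z p - box_coeff k w p)
      \<le> (\<Sum>j\<in>{mt..<m}. 8 * real k * real D * (1/2) ^ (j * k))"
    unfolding lincomb_var_field_boxes[OF assms(1)]
    using assms by (intro sum_mono level_sum_box_coeff_diff) simp_all
  also have "\<dots> = 8 * real k * real D * (\<Sum>j\<in>{mt..<m}. (1/2) ^ (j * k))"
    by (simp add: sum_distrib_left)
  also have "\<dots> \<le> 8 * real k * real D * (2 * (1/2) ^ (k * mt))"
    using sum_half_powers_mult_le[OF assms(1)] by (intro mult_left_mono) simp_all
  finally show ?thesis by simp
qed

lemma subgaussian_psi_sum:
  assumes "gaussian_family M b" "0 < k" "mt \<le> m"
  shows "subgaussian M (psi_sum k b mt m z) (real k * (real m - real mt))"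
  unfolding psi_sum_def using assms
  by (intro subgaussian_mono[OF subgaussian_lincomb] lincomb_var_box_coeff) simp_all

lemma subgaussian_psi_sum_diff:
  assumes "gaussian_family M b" "0 < k" "\<bar>fst z - fst w\<bar> \<le> int D" "\<bar>snd z - snd w\<bar> \<le> int D"
  shows "subgaussian M (\<lambda>\<omega>. psi_sum k b mt m z \<omega> - psi_sum k b mt m w \<omega>) (16 * real k * real D * (1/2) ^ (k * mt))"
  unfolding psi_sum_def lincomb_diff[symmetric] using assms
  by (intro subgaussian_mono[OF subgaussian_lincomb] lincomb_var_box_coeff_diff) simp_all

section \<open>Dyadic chaining\<close>

text \<open>\<open>dyadic_approx K l z\<close> is the corner of the dyadic box of side \<open>2\<^sup>K\<^sup>-\<^sup>l\<close> containing \<open>z\<close>;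
  for \<open>z \<in> V (2\<^sup>K)\<close> it moves from \<open>(0, 0)\<close> at \<open>l = 0\<close> to \<open>z\<close> at \<open>l = K\<close>.\<close>

definition dyadic_floor :: "nat \<Rightarrow> nat \<Rightarrow> int \<Rightarrow> int" where
  "dyadic_floor K l a = 2 ^ (K - l) * (a div 2 ^ (K - l))"

definition dyadic_approx :: "nat \<Rightarrow> nat \<Rightarrow> int \<times> int \<Rightarrow> int \<times> int" where
  "dyadic_approx K l z = (dyadic_floor K l (fst z), dyadic_floor K l (snd z))"

lemma dyadic_floor_bounds: "a - 2 ^ (K - l) < dyadic_floor K l a \<and> dyadic_floor K l a \<le> a"
proof -
  define d :: int where "d = 2 ^ (K - l)"
  have "0 < d" unfolding d_def by simp
  then have "0 \<le> a mod d" "a mod d < d" by simp_all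
  moreover have "a = d * (a div d) + a mod d" by simp
  ultimately show ?thesis unfolding dyadic_floor_def d_def[symmetric] by linarith
qed

lemma dyadic_floor_step:
  assumes "l < K"
  shows "\<bar>dyadic_floor K (Suc l) a - dyadic_floor K l a\<bar> \<le> 2 ^ (K - l)"
proof -
  have "(2::int) ^ (K - Suc l) \<le> 2 ^ (K - l)" by (intro power_increasing) auto
  then show ?thesis
    using dyadic_floor_bounds[of a K l] dyadic_floor_bounds[of a K "Suc l"] by linarith
qed

lemma dyadic_floor_self [simp]: "dyadic_floor K K a = a"
  unfolding dyadic_floor_def by simp

lemma dyadic_floor_0: "0 \<le> a \<Longrightarrow> a < 2 ^ K \<Longrightarrow> dyadic_floor K 0 a = 0"
  unfolding dyadic_floor_def by (simp add: div_pos_pos_trivial)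

lemma dyadic_floor_mem:
  assumes "0 \<le> a" "a < 2 ^ K" "l \<le> K"
  shows "dyadic_floor K l a \<in> (\<lambda>q. 2 ^ (K - l) * q) ` {0..<2 ^ l}"
proof -
  define d :: int where "d = 2 ^ (K - l)"
  have d: "0 < d" unfolding d_def by simp
  have K: "(2::int) ^ K = d * 2 ^ l"
    unfolding d_def using assms(3) by (simp add: power_add[symmetric])
  have "0 \<le> a div d" using assms d by (simp add: pos_imp_zdiv_nonneg_iff)
  moreover have "a div d < 2 ^ l"
  proof -
    have "d * (a div d) \<le> a" using dyadic_floor_bounds[of a K l] unfolding dyadic_floor_def d_def by simp
    then have "d * (a div d) < d * 2 ^ l" using assms(2) K by linarith
    then show ?thesis using d by simp
  qed
  ultimately show ?thesis unfolding dyadic_floor_def d_def[symmetric] by auto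
qed

lemma card_dyadic_approx_image:
  assumes "l \<le> K"
  shows "card (dyadic_approx K l ` V (2 ^ K)) \<le> 4 ^ l"
proof -
  define d :: int where "d = 2 ^ (K - l)"
  have sub: "dyadic_approx K l ` V (2 ^ K) \<subseteq> (\<lambda>(q1, q2). (d * q1, d * q2)) ` ({0..<2 ^ l} \<times> {0..<2 ^ l})"
  proof
    fix y assume "y \<in> dyadic_approx K l ` V (2 ^ K)"
    then obtain z where z: "z \<in> V (2 ^ K)" "y = dyadic_approx K l z" by auto
    have "dyadic_floor K l (fst z) \<in> (\<lambda>q. d * q) ` {0..<2 ^ l}"
      "dyadic_floor K l (snd z) \<in> (\<lambda>q. d * q) ` {0..<2 ^ l}"
      using z assms unfolding V_def d_def by (auto intro!: dyadic_floor_mem)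
    then show "y \<in> (\<lambda>(q1, q2). (d * q1, d * q2)) ` ({0..<2 ^ l} \<times> {0..<2 ^ l})"
      unfolding z dyadic_approx_def by force
  qed
  have "card (dyadic_approx K l ` V (2 ^ K))
      \<le> card ((\<lambda>(q1, q2). (d * q1, d * q2)) ` ({0..<(2::int) ^ l} \<times> {0..<2 ^ l}))"
    by (rule card_mono[OF _ sub]) simp
  also have "\<dots> \<le> card ({0..<(2::int) ^ l} \<times> {0..<(2::int) ^ l})" by (rule card_image_le) simp
  also have "\<dots> = 4 ^ l"
    by (simp add: card_cartesian_product nat_power_eq power_mult_distrib[symmetric])
  finally show ?thesis .
qed

definition dyadic_pairs :: "nat \<Rightarrow> nat \<Rightarrow> ((int \<times> int) \<times> (int \<times> int)) set" where
  "dyadic_pairs K l = (\<lambda>z. (dyadic_approx K (Suc l) z, dyadic_approx K l z)) ` V (2 ^ K)"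

lemma finite_dyadic_pairs [simp]: "finite (dyadic_pairs K l)"
  unfolding dyadic_pairs_def V_def by simp

lemma dyadic_pairs_nonempty: "dyadic_pairs K l \<noteq> {}"
  unfolding dyadic_pairs_def V_def by simp

lemma card_dyadic_pairs:
  assumes "l < K"
  shows "card (dyadic_pairs K l) \<le> 4 ^ (2 * l + 1)"
proof -
  have "dyadic_pairs K l \<subseteq> dyadic_approx K (Suc l) ` V (2 ^ K) \<times> dyadic_approx K l ` V (2 ^ K)"
    unfolding dyadic_pairs_def by auto
  then have "card (dyadic_pairs K l)
      \<le> card (dyadic_approx K (Suc l) ` V (2 ^ K)) * card (dyadic_approx K l ` V (2 ^ K))"
    unfolding card_cartesian_product[symmetric] by (rule card_mono[rotated]) (simp add: V_def)
  also have "\<dots> \<le> 4 ^ Suc l * 4 ^ l"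
    using assms by (intro mult_le_mono card_dyadic_approx_image) auto
  also have "\<dots> = 4 ^ (2 * l + 1)" by (simp flip: power_add)
  finally show ?thesis .
qed

lemma dyadic_pairs_dist:
  assumes "a \<in> dyadic_pairs K l" "l < K"
  shows "\<bar>fst (fst a) - fst (snd a)\<bar> \<le> int (2 ^ (K - l))" and "\<bar>snd (fst a) - snd (snd a)\<bar> \<le> int (2 ^ (K - l))"
  using assms dyadic_floor_step unfolding dyadic_pairs_def dyadic_approx_def by auto

lemma Max_le_dyadic_chaining:
  fixes f :: "int \<times> int \<Rightarrow> real"
  shows "Max (f ` V (2 ^ K)) \<le> f (0, 0) + (\<Sum>l<K. Max ((\<lambda>a. f (fst a) - f (snd a)) ` dyadic_pairs K l))"
proof -
  have "f z \<le> f (0, 0) + (\<Sum>l<K. Max ((\<lambda>a. f (fst a) - f (snd a)) ` dyadic_pairs K l))"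
    if z: "z \<in> V (2 ^ K)" for z
  proof -
    have "f z = f (dyadic_approx K 0 z) + (\<Sum>l<K. f (dyadic_approx K (Suc l) z) - f (dyadic_approx K l z))"
      using sum_lessThan_telescope[of "\<lambda>l. f (dyadic_approx K l z)" K] by (simp add: dyadic_approx_def)
    also have "dyadic_approx K 0 z = (0, 0)"
      using z by (auto simp: V_def dyadic_approx_def dyadic_floor_0)
    also have "(\<Sum>l<K. f (dyadic_approx K (Suc l) z) - f (dyadic_approx K l z))
        \<le> (\<Sum>l<K. Max ((\<lambda>a. f (fst a) - f (snd a)) ` dyadic_pairs K l))"
      using z by (intro sum_mono Max_ge finite_imageI finite_dyadic_pairs) (force simp: dyadic_pairs_def)
    finally show ?thesis by simp
  qed
  moreover have "finite (f ` V (2 ^ K))" "f ` V (2 ^ K) \<noteq> {}" by (auto simp: V_def)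
  ultimately show ?thesis by simp
qed

section \<open>The expectation bound\<close>

lemma finite_V [simp]: "finite (V T)"
  unfolding V_def by simp

lemma V_nonempty: "0 < T \<Longrightarrow> V T \<noteq> {}"
  unfolding V_def by simp

lemma card_V: "card (V T) = T * T"
  unfolding V_def by (simp add: card_cartesian_product)

lemma maxdiff_eq_Max_psi_sum:
  assumes "0 < k" "mt \<le> n div k"
  shows "maxdiff k b n mt = (\<lambda>\<omega>. Max ((\<lambda>z. psi_sum k b mt (n div k) z \<omega>) ` V (2 ^ (k * mt))))"
  unfolding maxdiff_def using phi_diff_eq_psi_sum[OF assms] by (intro ext arg_cong[where f = Max] image_cong) auto

definition chain_weight :: "nat \<Rightarrow> real" where
  "chain_weight l = (4 * real l + 10) * (3/4) ^ l"

lemma chain_weight_nonneg: "0 \<le> chain_weight l"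
  unfolding chain_weight_def by simp

lemma summable_chain_weight: "summable chain_weight"
proof (rule summable_ratio_test[where c = "11/12" and N = 2])
  fix l :: nat assume "2 \<le> l"
  then have "(4 * real (Suc l) + 10) * (3/4) * (3/4) ^ l \<le> 11/12 * (4 * real l + 10) * (3/4) ^ l"
    by (intro mult_right_mono) auto
  then show "norm (chain_weight (Suc l)) \<le> 11/12 * norm (chain_weight l)"
    unfolding chain_weight_def by (simp add: mult_ac)
qed simp

text \<open>The choice \<open>t = (4/3)\<^sup>l / \<surd>k\<close> in \<open>subgaussian_Max_expectation\<close> at level \<open>l\<close> of the chain,
  where there are at most \<open>4\<^sup>2\<^sup>l\<^sup>+\<^sup>1\<close> increments of variance at most \<open>16 k 2\<^sup>-\<^sup>l\<close>.\<close>

lemma chain_level_arith: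
  fixes s c :: real
  assumes s: "0 < s" and c: "c \<le> (2 * real l + 1) * 2"
  shows "c / ((4/3) ^ l / s) + (4/3) ^ l / s * (16 * s\<^sup>2 * (1/2) ^ l) / 2 \<le> s * chain_weight l"
proof -
  have "c / ((4/3) ^ l / s) = c * s * (3/4) ^ l"
    using s by (simp add: field_simps power_divide)
  also have "\<dots> \<le> (2 * real l + 1) * 2 * s * (3/4) ^ l"
    using c s by (intro mult_right_mono) auto
  finally have first: "c / ((4/3) ^ l / s) \<le> (2 * real l + 1) * 2 * s * (3/4) ^ l" .
  have "(4/3) ^ l / s * (16 * s\<^sup>2 * (1/2) ^ l) / 2 = 8 * s * ((4/3) ^ l * (1/2) ^ l)"
    using s by (simp add: field_simps power2_eq_square)
  also have "(4/3::real) ^ l * (1/2) ^ l = (2/3) ^ l"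
    by (simp add: power_mult_distrib[symmetric])
  also have "8 * s * (2/3) ^ l \<le> 8 * s * (3/4) ^ l"
    using s by (intro mult_left_mono power_mono) auto
  finally have "(4/3) ^ l / s * (16 * s\<^sup>2 * (1/2) ^ l) / 2 \<le> 8 * s * (3/4) ^ l" .
  with first show ?thesis
    unfolding chain_weight_def by (simp add: algebra_simps)
qed

lemma ln_card_dyadic_pairs:
  assumes "l < K"
  shows "ln (card (dyadic_pairs K l)) \<le> (2 * real l + 1) * 2"
proof -
  have "real (card (dyadic_pairs K l)) \<le> real (4 ^ (2 * l + 1))"
    using card_dyadic_pairs[OF assms] by (rule of_nat_mono)
  moreover have "0 < card (dyadic_pairs K l)"
    using dyadic_pairs_nonempty by (simp add: card_gt_0_iff)
  ultimately have "ln (card (dyadic_pairs K l)) \<le> ln (4 ^ (2 * l + 1))" by simp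
  also have "\<dots> = (2 * real l + 1) * (2 * ln 2)"
    using ln_realpow[of 4 "2 * l + 1"] ln_mult[of 2 2] by simp
  also have "\<dots> \<le> (2 * real l + 1) * 2"
    using ln_2_less_1 by (intro mult_left_mono) auto
  finally show ?thesis .
qed

lemma expectation_Max_chain_level:
  assumes b: "gaussian_family M b" and k: "0 < k" and l: "l < k * mt"
  shows "integrable M
      (\<lambda>\<omega>. Max ((\<lambda>a. psi_sum k b mt m (fst a) \<omega> - psi_sum k b mt m (snd a) \<omega>) ` dyadic_pairs (k * mt) l))"
    and "(\<integral>\<omega>. Max ((\<lambda>a. psi_sum k b mt m (fst a) \<omega> - psi_sum k b mt m (snd a) \<omega>) ` dyadic_pairs (k * mt) l) \<partial>M)
      \<le> sqrt k * chain_weight l"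
proof -
  interpret prob_space M using b by (rule gaussian_family_prob_space)
  note P = finite_dyadic_pairs dyadic_pairs_nonempty
  have "(2::real) ^ (k * mt - l) * (1/2) ^ (k * mt) = (1/2) ^ l"
    using l by (simp add: power_diff power_one_over field_simps)
  then have subg: "subgaussian M (\<lambda>\<omega>. psi_sum k b mt m (fst a) \<omega> - psi_sum k b mt m (snd a) \<omega>)
      (16 * real k * (1/2) ^ l)" if "a \<in> dyadic_pairs (k * mt) l" for a
    using subgaussian_psi_sum_diff[OF b k dyadic_pairs_dist[OF that l], where mt = mt and m = m]
    by (simp add: mult.assoc)
  define t where "t = (4/3::real) ^ l / sqrt k"
  have t: "0 < t" unfolding t_def using k by simp
  show "integrable M
      (\<lambda>\<omega>. Max ((\<lambda>a. psi_sum k b mt m (fst a) \<omega> - psi_sum k b mt m (snd a) \<omega>) ` dyadic_pairs (k * mt) l))"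
    by (rule subgaussian_Max_expectation(1)[OF P subg t])
  have "(\<integral>\<omega>. Max ((\<lambda>a. psi_sum k b mt m (fst a) \<omega> - psi_sum k b mt m (snd a) \<omega>) ` dyadic_pairs (k * mt) l) \<partial>M)
      \<le> ln (card (dyadic_pairs (k * mt) l)) / t + t * (16 * real k * (1/2) ^ l) / 2"
    by (rule subgaussian_Max_expectation(2)[OF P subg t])
  also have "\<dots> \<le> sqrt k * chain_weight l"
    using chain_level_arith[of "sqrt k" _ l] ln_card_dyadic_pairs[OF l] k unfolding t_def by simp
  finally show "(\<integral>\<omega>. Max ((\<lambda>a. psi_sum k b mt m (fst a) \<omega> - psi_sum k b mt m (snd a) \<omega>)
      ` dyadic_pairs (k * mt) l) \<partial>M) \<le> sqrt k * chain_weight l" .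
qed

lemma expectation_maxdiff_le:
  assumes b: "gaussian_family M b" and k: "0 < k" and mt: "mt \<le> n div k"
  shows "integrable M (maxdiff k b n mt) \<and> (\<integral>\<omega>. maxdiff k b n mt \<omega> \<partial>M) \<le> sqrt k * suminf chain_weight"
proof -
  interpret prob_space M using b by (rule gaussian_family_prob_space)
  define K where "K = k * mt"
  define F where "F = psi_sum k b mt (n div k)"
  define Y where "Y l \<omega> = Max ((\<lambda>a. F (fst a) \<omega> - F (snd a) \<omega>) ` dyadic_pairs K l)" for l \<omega>
  have maxdiff: "maxdiff k b n mt = (\<lambda>\<omega>. Max ((\<lambda>z. F z \<omega>) ` V (2 ^ K)))"
    unfolding maxdiff_eq_Max_psi_sum[OF k mt] F_def K_def ..
  have F_int: "integrable M (F z)" for z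
    unfolding F_def by (rule subgaussian_integrable[OF subgaussian_psi_sum[OF b k mt]])
  have Y_int: "integrable M (Y l)" and Y_le: "(\<integral>\<omega>. Y l \<omega> \<partial>M) \<le> sqrt k * chain_weight l"
    if "l \<in> {..<K}" for l
    using expectation_Max_chain_level[OF b k] that unfolding Y_def F_def K_def by simp_all
  have sum_int: "integrable M (\<lambda>\<omega>. \<Sum>l<K. Y l \<omega>)"
    using Y_int by (rule Bochner_Integration.integrable_sum)
  have int: "integrable M (maxdiff k b n mt)"
    unfolding maxdiff using V_nonempty by (intro integrable_Max F_int) auto
  have "(\<integral>\<omega>. maxdiff k b n mt \<omega> \<partial>M) \<le> (\<integral>\<omega>. F (0, 0) \<omega> + (\<Sum>l<K. Y l \<omega>) \<partial>M)"
    unfolding maxdiff Y_def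
    by (intro integral_mono Max_le_dyadic_chaining int[unfolded maxdiff]
        Bochner_Integration.integrable_add F_int sum_int[unfolded Y_def])
  also have "\<dots> = (\<integral>\<omega>. F (0, 0) \<omega> \<partial>M) + (\<Sum>l<K. \<integral>\<omega>. Y l \<omega> \<partial>M)"
    by (simp add: Bochner_Integration.integral_add[OF F_int sum_int])
      (rule Bochner_Integration.integral_sum[OF Y_int])
  also have "(\<integral>\<omega>. F (0, 0) \<omega> \<partial>M) = 0"
    unfolding F_def psi_sum_def using b by (rule integral_lincomb)
  also have "(\<Sum>l<K. \<integral>\<omega>. Y l \<omega> \<partial>M) \<le> (\<Sum>l<K. sqrt k * chain_weight l)"
    using Y_le by (rule sum_mono)
  also have "\<dots> \<le> sqrt k * suminf chain_weight"
    unfolding sum_distrib_left[symmetric]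
    by (intro mult_left_mono sum_le_suminf summable_chain_weight chain_weight_nonneg) auto
  finally show ?thesis using int by simp
qed

section \<open>The tail bound\<close>

lemma (in prob_space) prob_Max_gt_le_split:
  fixes X :: "'i \<Rightarrow> 'a \<Rightarrow> real"
  assumes A: "finite A" "i\<^sub>0 \<in> A" and X: "\<And>i. i \<in> A \<Longrightarrow> X i \<in> borel_measurable M"
  shows "prob {\<omega> \<in> space M. a < Max ((\<lambda>i. X i \<omega>) ` A)}
    \<le> prob {\<omega> \<in> space M. a/2 < X i\<^sub>0 \<omega>} + prob {\<omega> \<in> space M. a/2 < Max ((\<lambda>i. X i \<omega> - X i\<^sub>0 \<omega>) ` A)}"
proof (rule order_trans[OF finite_measure_mono measure_Un_le])
  show "{\<omega> \<in> space M. a < Max ((\<lambda>i. X i \<omega>) ` A)}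
      \<subseteq> {\<omega> \<in> space M. a/2 < X i\<^sub>0 \<omega>} \<union> {\<omega> \<in> space M. a/2 < Max ((\<lambda>i. X i \<omega> - X i\<^sub>0 \<omega>) ` A)}"
  proof
    fix \<omega> assume "\<omega> \<in> {\<omega> \<in> space M. a < Max ((\<lambda>i. X i \<omega>) ` A)}"
    then obtain i where i: "\<omega> \<in> space M" "i \<in> A" "a < X i \<omega>"
      using A Max_gr_iff[of "(\<lambda>i. X i \<omega>) ` A" a] by auto
    have "X i \<omega> - X i\<^sub>0 \<omega> \<le> Max ((\<lambda>i. X i \<omega> - X i\<^sub>0 \<omega>) ` A)"
      using i A by (intro Max_ge) auto
    then have "a/2 < X i\<^sub>0 \<omega> \<or> a/2 < Max ((\<lambda>i. X i \<omega> - X i\<^sub>0 \<omega>) ` A)"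
      using i by linarith
    then show "\<omega> \<in> {\<omega> \<in> space M. a/2 < X i\<^sub>0 \<omega>} \<union> {\<omega> \<in> space M. a/2 < Max ((\<lambda>i. X i \<omega> - X i\<^sub>0 \<omega>) ` A)}"
      using i by auto
  qed
qed (use A X in auto)

lemma tail_exponent_small_variance:
  fixes x \<delta> s :: real
  assumes "0 < s" "s \<le> 3/4 * \<delta>\<^sup>2 * x" "0 \<le> x"
  shows "2 * x - (2 * \<delta> * x)\<^sup>2 / (2 * s) \<le> - (2 * \<delta> * x)\<^sup>2 / (8 * s)"
proof -
  have "2 * x * s \<le> 2 * x * (3/4 * \<delta>\<^sup>2 * x)"
    using assms by (intro mult_left_mono) auto
  then have "2 * x * s \<le> 3/8 * (2 * \<delta> * x)\<^sup>2"
    by (simp add: power2_eq_square)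
  then show ?thesis
    using assms(1) by (simp add: field_simps)
qed

text \<open>Any constant \<open>c\<close> with \<open>c/32 \<ge> 2 + 2/3\<close> would do in place of 86.\<close>

lemma tail_exponent_large_variance:
  fixes x \<delta> s \<kappa> :: real
  assumes "3/4 * \<delta>\<^sup>2 * x < s" "0 < \<kappa>" "86 * \<kappa> \<le> \<delta>\<^sup>2 * x" "0 \<le> x"
  shows "2 * x - (\<delta> * x)\<^sup>2 / (32 * \<kappa>) \<le> - (2 * \<delta> * x)\<^sup>2 / (8 * s)"
proof -
  have "0 \<le> 3/4 * \<delta>\<^sup>2 * x" using assms(4) by simp
  then have s: "0 < s" using assms(1) by linarith
  have "(2 * \<delta> * x)\<^sup>2 = 16/3 * (3/4 * \<delta>\<^sup>2 * x) * x"
    by (simp add: power2_eq_square)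
  also have "\<dots> \<le> 16/3 * s * x"
    using assms by (intro mult_right_mono mult_left_mono) auto
  finally have small: "(2 * \<delta> * x)\<^sup>2 / (8 * s) \<le> 2/3 * x"
    using s by (simp add: field_simps)
  have "86 * \<kappa> * x \<le> \<delta>\<^sup>2 * x * x"
    using assms by (intro mult_right_mono) auto
  then have large: "86/32 * x \<le> (\<delta> * x)\<^sup>2 / (32 * \<kappa>)"
    using assms(2) by (simp add: field_simps power2_eq_square)
  from small large assms(4) show ?thesis
    unfolding minus_divide_left[symmetric] by linarith
qed

lemma card_V_le_exp:
  assumes "K \<le> n"
  shows "real (card (V (2 ^ K))) \<le> exp (2 * (real n * ln 2))"
proof -
  have "real (card (V (2 ^ K))) = 4 ^ K"
    by (simp add: card_V power_mult_distrib[symmetric])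
  also have "\<dots> \<le> 4 ^ n"
    using assms by (intro power_increasing) auto
  also have "(4::real) ^ n = exp (real n * ln 4)"
    by (simp add: exp_of_nat_mult)
  also have "real n * ln (4::real) = 2 * (real n * ln 2)"
    using ln_realpow[of 2 2] by simp
  finally show ?thesis .
qed

lemma tail_maxdiff_le:
  assumes b: "gaussian_family M b" and k: "0 < k" and mt: "mt < n div k"
    and \<delta>: "0 < \<delta>" and n: "86 * real k \<le> \<delta>\<^sup>2 * (real n * ln 2)"
  shows "measure M {\<omega> \<in> space M. maxdiff k b n mt \<omega> > 2 * \<delta> * ln (2 ^ n)}
    \<le> 2 * exp (- (\<delta>\<^sup>2 * (ln 2)\<^sup>2 / (2 * real k * (real (n div k) - real mt))) * (real n)\<^sup>2)"
proof -
  interpret prob_space M using b by (rule gaussian_family_prob_space)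
  define K where "K = k * mt"
  define F where "F = psi_sum k b mt (n div k)"
  define x where "x = real n * ln 2"
  define u where "u = 2 * \<delta> * x"
  define s2 where "s2 = real k * (real (n div k) - real mt)"
  have s2: "0 < s2" unfolding s2_def using k mt by simp
  have x: "0 \<le> x" unfolding x_def by simp
  have u: "0 \<le> u" unfolding u_def using \<delta> x by simp
  have V: "finite (V (2 ^ K))" "(0, 0) \<in> V (2 ^ K)" unfolding V_def by auto
  have card_V_le: "real (card (V (2 ^ K))) \<le> exp (2 * x)"
  proof -
    have "K \<le> k * (n div k)" unfolding K_def using mt by simp
    also have "\<dots> \<le> n" by simp
    finally show ?thesis unfolding x_def by (rule card_V_le_exp)
  qed
  have F: "subgaussian M (F z) s2" for z
    unfolding F_def s2_def using subgaussian_psi_sum[OF b k] mt by simp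
  have \<Delta>F: "subgaussian M (\<lambda>\<omega>. F z \<omega> - F (0, 0) \<omega>) (16 * real k)" if "z \<in> V (2 ^ K)" for z
  proof -
    have "\<bar>fst z - fst (0::int, 0::int)\<bar> \<le> int (2 ^ K)" "\<bar>snd z - snd (0::int, 0::int)\<bar> \<le> int (2 ^ K)"
      using that unfolding V_def by auto
    from subgaussian_psi_sum_diff[OF b k this, of mt "n div k"] show ?thesis
      unfolding F_def K_def by (simp add: power_one_over field_simps)
  qed
  have event: "{\<omega> \<in> space M. maxdiff k b n mt \<omega> > 2 * \<delta> * ln (2 ^ n)}
      = {\<omega> \<in> space M. u < Max ((\<lambda>z. F z \<omega>) ` V (2 ^ K))}"
    unfolding maxdiff_eq_Max_psi_sum[OF k less_imp_le[OF mt]] u_def x_def F_def K_def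
    by (simp add: ln_realpow)
  have bound: "- (\<delta>\<^sup>2 * (ln 2)\<^sup>2 / (2 * real k * (real (n div k) - real mt))) * (real n)\<^sup>2 = - u\<^sup>2 / (8 * s2)"
  proof -
    have den: "2 * real k * (real (n div k) - real mt) = 2 * s2" by (simp add: s2_def)
    have "\<delta>\<^sup>2 * (ln 2)\<^sup>2 / (2 * s2) * (real n)\<^sup>2 = u\<^sup>2 / (8 * s2)"
      using s2 unfolding u_def x_def by (simp add: field_simps power2_eq_square)
    then show ?thesis unfolding den by (metis minus_divide_left mult_minus_left)
  qed
  have "prob {\<omega> \<in> space M. u < Max ((\<lambda>z. F z \<omega>) ` V (2 ^ K))} \<le> 2 * exp (- u\<^sup>2 / (8 * s2))"
  proof (cases "s2 \<le> 3/4 * \<delta>\<^sup>2 * x")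
    case True
    have "prob {\<omega> \<in> space M. u < Max ((\<lambda>z. F z \<omega>) ` V (2 ^ K))} \<le> card (V (2 ^ K)) * exp (- u\<^sup>2 / (2 * s2))"
      using V F s2 u by (intro subgaussian_Max_tail) auto
    also have "\<dots> \<le> exp (2 * x) * exp (- u\<^sup>2 / (2 * s2))"
      using card_V_le by (intro mult_right_mono) auto
    also have "\<dots> \<le> exp (- u\<^sup>2 / (8 * s2))"
      using tail_exponent_small_variance[OF s2 True x] unfolding u_def exp_add[symmetric] by simp
    also have "\<dots> \<le> 2 * exp (- u\<^sup>2 / (8 * s2))" by simp
    finally show ?thesis .
  next
    case False
    have "prob {\<omega> \<in> space M. u < Max ((\<lambda>z. F z \<omega>) ` V (2 ^ K))}
        \<le> prob {\<omega> \<in> space M. u/2 < F (0, 0) \<omega>} + prob {\<omega> \<in> space M. u/2 < Max ((\<lambda>z. F z \<omega> - F (0, 0) \<omega>) ` V (2 ^ K))}"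
      using V F unfolding subgaussian_def by (intro prob_Max_gt_le_split) auto
    also have "\<dots> \<le> exp (- (u/2)\<^sup>2 / (2 * s2)) + card (V (2 ^ K)) * exp (- (u/2)\<^sup>2 / (2 * (16 * real k)))"
      using F \<Delta>F V s2 u k by (intro add_mono subgaussian_tail subgaussian_Max_tail) auto
    also have "\<dots> \<le> exp (- u\<^sup>2 / (8 * s2)) + exp (2 * x) * exp (- (\<delta> * x)\<^sup>2 / (32 * real k))"
      using card_V_le unfolding u_def
      by (intro add_mono mult_right_mono) (auto simp: power2_eq_square mult_ac)
    also have "exp (2 * x) * exp (- (\<delta> * x)\<^sup>2 / (32 * real k)) \<le> exp (- u\<^sup>2 / (8 * s2))"
      using tail_exponent_large_variance[of \<delta> x s2 "real k"] False k n x
      unfolding u_def x_def exp_add[symmetric] by simp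
    finally show ?thesis by simp
  qed
  then show ?thesis unfolding event bound .
qed

lemma eventually_le_linear:
  fixes a c :: real
  assumes "0 < c"
  shows "\<forall>\<^sub>F n in sequentially. a \<le> c * real n"
  using eventually_ge_at_top[of "nat \<lceil>a / c\<rceil>"]
proof eventually_elim
  case (elim n)
  then have "a / c \<le> real n" by linarith
  then show ?case using assms by (simp add: pos_divide_le_eq mult.commute)
qed

theorem lemma3p6:
  shows "(\<exists>C_F::real. \<forall>(M::'a measure) b k n mt.
            gaussian_family M b \<and> 1 \<le> k \<and> 1 \<le> n \<and> 1 \<le> mt \<and> mt < n div k \<longrightarrow>
              integrable M (maxdiff k b n mt) \<and>
              integral\<^sup>L M (maxdiff k b n mt) \<le> sqrt (8 * real k) * C_F)
       \<and> (\<forall>\<delta>::real. \<forall>k::nat. \<delta> > 0 \<and> 1 \<le> k \<longrightarrow>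
            (\<forall>\<^sub>F n in sequentially. \<forall>(M::'a measure) b mt.
               gaussian_family M b \<and> 1 \<le> mt \<and> mt < n div k \<longrightarrow>
                 measure M {\<omega> \<in> space M. maxdiff k b n mt \<omega> > 2 * \<delta> * ln (2 ^ n)}
                 \<le> 2 * exp (- (\<delta>\<^sup>2 * (ln 2)\<^sup>2 / (2 * real k * (real (n div k) - real mt)))
                             * (real n)\<^sup>2)))"
proof (rule conjI[OF exI[of _ "suminf chain_weight / sqrt 8"]]; intro allI impI)
  fix M :: "'a measure" and b :: "nat \<times> (int \<times> int) \<Rightarrow> 'a \<Rightarrow> real" and k n mt :: nat
  assume "gaussian_family M b \<and> 1 \<le> k \<and> 1 \<le> n \<and> 1 \<le> mt \<and> mt < n div k"
  then show "integrable M (maxdiff k b n mt) \<and>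
      integral\<^sup>L M (maxdiff k b n mt) \<le> sqrt (8 * real k) * (suminf chain_weight / sqrt 8)"
    using expectation_maxdiff_le[of M b k mt n] by (simp add: real_sqrt_mult)
next
  fix \<delta> :: real and k :: nat
  assume \<delta>k: "\<delta> > 0 \<and> 1 \<le> k"
  then have "\<forall>\<^sub>F n in sequentially. 86 * real k \<le> \<delta>\<^sup>2 * ln 2 * real n"
    by (intro eventually_le_linear) simp
  then have "\<forall>\<^sub>F n in sequentially. 86 * real k \<le> \<delta>\<^sup>2 * (real n * ln 2)"
    by eventually_elim (simp add: mult_ac)
  then show "\<forall>\<^sub>F n in sequentially. \<forall>(M::'a measure) b mt.
      gaussian_family M b \<and> 1 \<le> mt \<and> mt < n div k \<longrightarrow>
        measure M {\<omega> \<in> space M. maxdiff k b n mt \<omega> > 2 * \<delta> * ln (2 ^ n)}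
        \<le> 2 * exp (- (\<delta>\<^sup>2 * (ln 2)\<^sup>2 / (2 * real k * (real (n div k) - real mt))) * (real n)\<^sup>2)"
    by eventually_elim (intro allI impI tail_maxdiff_le; use \<delta>k in auto)
qed

end
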